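(* Let $v$ satisfy the standing assumptions and the doubling condition, and let $g(x)=v(1-x^{-1})$. Suppose that for every $q>1$ there exist $A(q)>1$ and $y_0$ such that for all $y>y_0$ and $x>qy$ one has $g(x)>A(q)\,g(y)$. Let $u(z)=\operatorname{Re}\sum_k a_{n_k}z^{n_k}$ be a Hadamard gap series ($n_k$ positive integers, $n_{k+1}\ge\lambda n_k$, $\lambda>1$). If there is $C$ with $|a_{n_k}|\le C g(n_k)$ for all $k$, then $u\in h^\infty_v$.
   Context: Standing assumptions: $v:[0,1)\to[1,\infty)$ is positive, increasing, continuous, $v(0)=1$, $\lim_{r\to1}v(r)=+\infty$. Doubling condition: there is $D\ge1$ with $v(1-d)\le D\,v(1-2d)$ for all $d\in(0,1/2]$. $h^\infty_v$ is the set of real harmonic $u$ on $\mathbb{D}$ with $|u(z)|\le Kv(|z|)$ for some $K>0$. *)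

theory Defs
  imports "HOL-Analysis.Analysis"
begin

text \<open>Real harmonic functions on an open set of the plane (identified with complex):
  C^2 functions whose Laplacian vanishes. ux, uy are the first partials,
  uxx, uxy, uyx, uyy the second partials.\<close>
definition harmonic_on :: "complex set \<Rightarrow> (complex \<Rightarrow> real) \<Rightarrow> bool" where
  "harmonic_on S u \<longleftrightarrow> open S \<and>
     (\<exists>ux uy uxx uxy uyx uyy.
        (\<forall>z\<in>S. (u has_derivative (\<lambda>h. Re h * ux z + Im h * uy z)) (at z)
              \<and> (ux has_derivative (\<lambda>h. Re h * uxx z + Im h * uxy z)) (at z)
              \<and> (uy has_derivative (\<lambda>h. Re h * uyx z + Im h * uyy z)) (at z)
              \<and> uxx z + uyy z = 0)
        \<and> continuous_on S uxx \<and> continuous_on S uxy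
        \<and> continuous_on S uyx \<and> continuous_on S uyy)"

definition weight :: "(real \<Rightarrow> real) \<Rightarrow> bool" where
  "weight v \<longleftrightarrow> (\<forall>r\<in>{0..<1}. v r \<ge> 1) \<and> mono_on {0..<1} v
     \<and> continuous_on {0..<1} v \<and> v 0 = 1 \<and> filterlim v at_top (at_left 1)"

definition doubling :: "(real \<Rightarrow> real) \<Rightarrow> bool" where
  "doubling v \<longleftrightarrow> (\<exists>D\<ge>1. \<forall>d\<in>{0<..1/2}. v (1 - d) \<le> D * v (1 - 2 * d))"

definition h_inf :: "(real \<Rightarrow> real) \<Rightarrow> (complex \<Rightarrow> real) set" where
  "h_inf v = {u. harmonic_on (ball 0 1) u \<and>
                 (\<exists>K>0. \<forall>z\<in>ball 0 1. \<bar>u z\<bar> \<le> K * v (norm z))}"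

end

theory Submission
  imports Defs "HOL-Complex_Analysis.Cauchy_Integral_Formula"
begin

(* Write g(x) = v(1 - 1/x) for x >= 1 and r = 1 - 1/t, so that v(r) = g(t).  Since
   |a_k z^(n_k)| <= C g(n_k) r^(n_k) for |z| = r, everything reduces to the estimate

       sum_k g(n_k) r^(n_k) <= B g(t)        (B independent of t),

   proved by splitting the indices at the first k with n_k > t:
   - head (n_k <= t): the growth hypothesis on g makes g(n_k) grow geometrically from
     some k0 on, so the head sum is dominated by its last term, which is <= g(t);
   - tail (n_k > t): iterating the doubling condition gives g(N) <= D^j g(t) when
     N <= 2^j t, and with (1 - 1/t)^N <= exp(-N/t) one gets g(N) r^N <= M (t/N) g(t);
     the lacunarity n_(k+1) >= lam n_k turns this into a geometric series.
   Harmonicity comes from the fact that the gap series is a power series, hence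
   holomorphic in the disc, and real parts of holomorphic functions are harmonic. *)

abbreviation gweight :: "(real \<Rightarrow> real) \<Rightarrow> real \<Rightarrow> real" where
  "gweight v x \<equiv> v (1 - 1/x)"

section \<open>Real parts of holomorphic functions are harmonic\<close>

lemma has_derivative_Re_of_field_derivative:
  assumes "(f has_field_derivative w) (at z)"
  shows "((\<lambda>x. Re (f x)) has_derivative (\<lambda>h. Re h * Re w + Im h * (- Im w))) (at z)"
proof -
  have "((\<lambda>x. Re (f x)) has_derivative (\<lambda>h. Re (w * h))) (at z)"
    using bounded_linear.has_derivative[OF bounded_linear_Re
        has_field_derivative_imp_has_derivative[OF assms]] by simp
  moreover have "(\<lambda>h. Re (w * h)) = (\<lambda>h. Re h * Re w + Im h * (- Im w))"
    by (auto simp: algebra_simps)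
  ultimately show ?thesis by simp
qed

text \<open>Likewise for minus the imaginary part, which is the \<open>y\<close>-derivative of \<open>Re f\<close>.\<close>
lemma has_derivative_neg_Im_of_field_derivative:
  assumes "(f has_field_derivative w) (at z)"
  shows "((\<lambda>x. - Im (f x)) has_derivative (\<lambda>h. Re h * (- Im w) + Im h * (- Re w))) (at z)"
proof -
  have "((\<lambda>x. - Im (f x)) has_derivative (\<lambda>h. - Im (w * h))) (at z)"
    using bounded_linear.has_derivative[OF bounded_linear_Im
        has_field_derivative_imp_has_derivative[OF assms]] by (intro has_derivative_minus) simp
  moreover have "(\<lambda>h. - Im (w * h)) = (\<lambda>h. Re h * (- Im w) + Im h * (- Re w))"
    by (auto simp: algebra_simps)
  ultimately show ?thesis by simp
qed

text \<open>With \<open>u = Re f\<close>: \<open>u_x = Re f'\<close>, \<open>u_y = - Im f'\<close>, \<open>u_xx = Re f''\<close>, \<open>u_yy = - Re f''\<close>,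
  \<open>u_xy = u_yx = - Im f''\<close>; the second derivatives are continuous because \<open>f''\<close> is
  holomorphic.\<close>
lemma harmonic_on_Re_holomorphic:
  assumes holo: "f holomorphic_on S" and S: "open S"
  shows "harmonic_on S (\<lambda>z. Re (f z))"
proof -
  define f' where "f' = deriv f"
  define f'' where "f'' = deriv f'"
  have holo': "f' holomorphic_on S" and holo'': "f'' holomorphic_on S"
    unfolding f'_def f''_def using holo S by (auto intro!: holomorphic_deriv)
  have D0: "(f has_field_derivative f' z) (at z)" and D1: "(f' has_field_derivative f'' z) (at z)"
    if "z \<in> S" for z
    unfolding f'_def f''_def
    using holomorphic_derivI[OF holo S that] holomorphic_derivI[OF holo' S that, unfolded f'_def]
    by blast+
  have cont: "continuous_on S f''"
    using holo'' by (rule holomorphic_on_imp_continuous_on)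
  let ?ux = "\<lambda>z. Re (f' z)" and ?uy = "\<lambda>z. - Im (f' z)"
  let ?uxx = "\<lambda>z. Re (f'' z)" and ?uxy = "\<lambda>z. - Im (f'' z)" and ?uyy = "\<lambda>z. - Re (f'' z)"
  have derivs: "\<forall>z\<in>S. ((\<lambda>z. Re (f z)) has_derivative (\<lambda>h. Re h * ?ux z + Im h * ?uy z)) (at z)
            \<and> (?ux has_derivative (\<lambda>h. Re h * ?uxx z + Im h * ?uxy z)) (at z)
            \<and> (?uy has_derivative (\<lambda>h. Re h * ?uxy z + Im h * ?uyy z)) (at z)
            \<and> ?uxx z + ?uyy z = 0"
    using has_derivative_Re_of_field_derivative[OF D0] has_derivative_Re_of_field_derivative[OF D1]
      has_derivative_neg_Im_of_field_derivative[OF D1] by simp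
  have conts: "continuous_on S ?uxx" "continuous_on S ?uxy" "continuous_on S ?uyy"
    using cont by (auto intro!: continuous_intros)
  show ?thesis
    unfolding harmonic_on_def
    apply (rule conjI[OF S])
    apply (rule exI[of _ ?ux], rule exI[of _ ?uy], rule exI[of _ ?uxx],
        rule exI[of _ ?uxy], rule exI[of _ ?uxy], rule exI[of _ ?uyy])
    using derivs conts by blast
qed

text \<open>A gap series \<open>\<Sum>k. a k * z ^ n k\<close> with strictly increasing exponents is the power
  series with coefficient \<open>a k\<close> at \<open>n k\<close> and \<open>0\<close> elsewhere; hence it is holomorphic on
  every disc where it converges.\<close>
lemma gap_series_holomorphic:
  fixes a :: "nat \<Rightarrow> complex"
  assumes mono: "strict_mono n" and conv: "\<And>z. z \<in> ball 0 R \<Longrightarrow> summable (\<lambda>k. a k * z ^ n k)"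
  shows "(\<lambda>z. \<Sum>k. a k * z ^ n k) holomorphic_on ball 0 R"
proof (rule power_series_holomorphic)
  define c where "c m = (if m \<in> range n then a (inv n m) else 0)" for m
  fix z :: complex assume z: "z \<in> ball 0 R"
  have "(\<lambda>k. c (n k) * z ^ n k) = (\<lambda>k. a k * z ^ n k)"
    using strict_mono_imp_inj_on[OF mono] by (auto simp: c_def inv_f_f)
  then have "(\<lambda>k. c (n k) * z ^ n k) sums (\<Sum>k. a k * z ^ n k)"
    using summable_sums[OF conv[OF z]] by simp
  then show "(\<lambda>m. c m * (z - 0) ^ m) sums (\<Sum>k. a k * z ^ n k)"
    using sums_mono_reindex[OF mono, of "\<lambda>m. c m * z ^ m"] by (simp add: c_def)
qed

section \<open>Elementary properties of the weight\<close>

text \<open>\<open>g\<close> inherits \<open>g \<ge> 1\<close> and monotonicity from \<open>v\<close>, since \<open>x \<mapsto> 1 - 1/x\<close> maps \<open>[1,\<infinity>)\<close>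
  increasingly into \<open>[0,1)\<close>.\<close>
lemma gweight_ge_1:
  assumes "weight v" "x \<ge> 1"
  shows "gweight v x \<ge> 1"
proof -
  have "1 - 1/x \<in> {0..<1}" using assms(2) by (auto simp: field_simps)
  then show ?thesis using assms(1) unfolding weight_def by auto
qed

lemma gweight_mono:
  assumes "weight v" "1 \<le> x" "x \<le> y"
  shows "gweight v x \<le> gweight v y"
proof -
  have "1 - 1/x \<in> {0..<1}" "1 - 1/y \<in> {0..<1}" "1 - 1/x \<le> 1 - 1/y"
    using assms(2,3) by (auto simp: field_simps frac_le)
  moreover have "mono_on {0..<1} v" using assms(1) unfolding weight_def by auto
  ultimately show ?thesis by (meson mono_onD)
qed

lemma gweight_halve:
  assumes w: "weight v" and doubling: "\<forall>d\<in>{0<..1/2}. v (1 - d) \<le> D * v (1 - 2 * d)"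
    and x: "x \<ge> 1"
  shows "gweight v x \<le> D * gweight v (max 1 (x/2))"
proof (cases "x < 2")
  case True
  then have "gweight v x \<le> gweight v 2" using gweight_mono[OF w x, of 2] by linarith
  also have "\<dots> \<le> D * v (1 - 2 * (1/2))" using doubling[rule_format, of "1/2"] by simp
  also have "1 - 2 * (1/2) = 1 - 1 / max 1 (x/2)" using True by simp
  finally show ?thesis .
next
  case False
  then have "1/x \<in> {0<..1/2}" by (auto simp: field_simps)
  then have "gweight v x \<le> D * v (1 - 2 * (1/x))" using doubling by blast
  also have "1 - 2 * (1/x) = 1 - 1/(x/2)" by simp
  finally show ?thesis using False by simp
qed

lemma gweight_doubling_iterate:
  assumes w: "weight v" and D: "D \<ge> 1"
    and doubling: "\<forall>d\<in>{0<..1/2}. v (1 - d) \<le> D * v (1 - 2 * d)"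
    and t: "t \<ge> 1" and x: "1 \<le> x" "x \<le> 2^j * t"
  shows "gweight v x \<le> D^j * gweight v t"
  using x
proof (induction j arbitrary: x)
  case 0
  then show ?case using gweight_mono[OF w] by simp
next
  case (Suc j)
  have "1 \<le> 2^j * t" using t mult_mono[of 1 "2^j" 1 t] by simp
  then have "max 1 (x/2) \<le> 2^j * t" using Suc.prems by simp
  then have "gweight v (max 1 (x/2)) \<le> D^j * gweight v t" by (rule Suc.IH[rotated]) simp
  then have "D * gweight v (max 1 (x/2)) \<le> D^Suc j * gweight v t"
    using D by (simp add: mult.assoc)
  then show ?case using gweight_halve[OF w doubling Suc.prems(1)] by linarith
qed

lemma power_times_exp_neg_dyadic_bounded:
  fixes E :: real
  assumes E: "E \<ge> 1"
  shows "\<exists>M. \<forall>j. E^j * exp (-(2^j)/2) \<le> M"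
proof -
  obtain m0 where "E < 2^m0" using real_arch_pow[of 2 E] by auto
  define m where "m = Suc m0"
  have "(2::real)^m0 \<le> 2^m" unfolding m_def by (rule power_increasing) auto
  then have m: "E \<le> 2^m" "m > 0" using \<open>E < 2^m0\<close> by (linarith, simp add: m_def)
  have "E^j * exp (-(2^j)/2) \<le> (2 * real m)^m" for j
  proof -
    define y :: real where "y = 2^j/2"
    have y: "y > 0" unfolding y_def by simp
    have "(y / real m)^m \<le> (1 + y / real m)^m" by (rule power_mono) (use y in auto)
    also have "\<dots> \<le> exp y" by (rule exp_ge_one_plus_x_over_n_power_n) (use y m in auto)
    finally have ey: "(y / real m)^m \<le> exp y" .
    have "E^j \<le> (2^m)^j" by (rule power_mono) (use m E in auto)
    also have "\<dots> = (2^j)^m" by (metis power_mult mult.commute)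
    also have "(2::real)^j = (2 * real m) * (y / real m)" using m(2) by (simp add: y_def)
    also have "((2 * real m) * (y / real m))^m = (2 * real m)^m * (y / real m)^m"
      by (rule power_mult_distrib)
    also have "\<dots> \<le> (2 * real m)^m * exp y" using ey by (intro mult_left_mono) auto
    finally have "E^j * exp (-y) \<le> (2 * real m)^m * exp y * exp (-y)"
      by (intro mult_right_mono) auto
    also have "\<dots> = (2 * real m)^m" by (simp add: exp_minus)
    finally show ?thesis by (simp add: y_def)
  qed
  then show ?thesis by blast
qed

lemma bound_of_dyadic_decay_nonneg:
  fixes E M :: real
  assumes "\<forall>j. E^j * exp (-(2^j)/2) \<le> M"
  shows "M \<ge> 0"
proof -
  have "0 < exp (-(1/2)::real)" by simp
  also have "\<dots> \<le> M" using assms[rule_format, of 0] by simp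
  finally show ?thesis by simp
qed

lemma dyadic_bracket:
  fixes t N :: real
  assumes "t > 0" "N > t"
  obtains j :: nat where "N \<le> 2^j * t" "2^j * t < 2 * N"
proof -
  have ex: "\<exists>j::nat. N \<le> 2^j * t"
  proof -
    obtain j :: nat where "N / t < 2^j" using real_arch_pow[of 2 "N / t"] by auto
    then show ?thesis using assms(1) by (auto simp: field_simps intro!: exI[of _ j])
  qed
  define j where "j = (LEAST j::nat. N \<le> 2^j * t)"
  have upper: "N \<le> 2^j * t" unfolding j_def using LeastI_ex[OF ex] .
  have "2^j * t < 2 * N"
  proof (cases j)
    case 0 then show ?thesis using upper assms by simp
  next
    case (Suc i)
    then have "\<not> N \<le> 2^i * t" using not_less_Least[of i "\<lambda>j. N \<le> 2^j * t"] j_def by auto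
    then show ?thesis using Suc by simp
  qed
  with upper show ?thesis using that by blast
qed

text \<open>If \<open>N \<approx> 2^j t\<close>, the
  doubling condition gives \<open>g(N) \<le> D^j g(t)\<close> while \<open>(1 - 1/t)^N \<le> e^(-N/t) \<le> e^(-2^j/2)\<close>.\<close>
lemma gweight_term_beyond:
  fixes N :: nat
  assumes w: "weight v" and D: "D \<ge> 1"
    and doubling: "\<forall>d\<in>{0<..1/2}. v (1 - d) \<le> D * v (1 - 2 * d)"
    and M: "\<forall>j. (2*D)^j * exp (-(2^j)/2) \<le> M"
    and t: "t \<ge> 1" and Nt: "real N > t"
  shows "gweight v N * (1 - 1/t)^N \<le> M * (t / N) * gweight v t"
proof -
  obtain j where j: "N \<le> 2^j * t" "2^j * t < 2 * N"
    using dyadic_bracket[of t "real N"] t Nt by auto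
  have gt: "gweight v t \<ge> 1" using gweight_ge_1[OF w t] .
  have gN: "gweight v N \<le> D^j * gweight v t"
    using gweight_doubling_iterate[OF w D doubling t _ j(1)] Nt t by simp
  have "(1 - 1/t)^N \<le> exp (-1/t)^N"
    by (rule power_mono) (use t exp_ge_add_one_self[of "-1/t"] in \<open>auto simp: field_simps\<close>)
  also have "\<dots> = exp (- N/t)" by (simp add: exp_of_nat_mult[symmetric])
  also have "\<dots> \<le> exp (-(2^j)/2)" using j(2) t by (simp add: field_simps)
  finally have rN: "(1 - 1/t)^N \<le> exp (-(2^j)/2)" .
  have "gweight v N * (1 - 1/t)^N \<le> (D^j * gweight v t) * exp (-(2^j)/2)"
    by (rule mult_mono[OF gN rN]) (use t gt D in \<open>auto simp: field_simps\<close>)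
  also have "\<dots> = ((2*D)^j * exp (-(2^j)/2)) * (1/2^j) * gweight v t"
    by (simp add: power_mult_distrib field_simps)
  also have "\<dots> \<le> M * (1/2^j) * gweight v t"
    using M gt by (intro mult_right_mono) auto
  also have "\<dots> \<le> M * (t / N) * gweight v t"
  proof -
    have "M \<ge> 0" using bound_of_dyadic_decay_nonneg[OF M] .
    moreover have "1/2^j \<le> t / N" using j(1) Nt t by (simp add: field_simps)
    ultimately show ?thesis using gt by (intro mult_right_mono mult_left_mono) auto
  qed
  finally show ?thesis .
qed

section \<open>Lacunary sequences\<close>

lemma lacunary_growth:
  assumes lac: "\<forall>k. real (n (Suc k)) \<ge> lam * real (n k)" and lam: "lam \<ge> 1"
  shows "real (n (K+i)) \<ge> lam^i * real (n K)"
proof (induction i)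
  case 0 then show ?case by simp
next
  case (Suc i)
  have "lam^Suc i * real (n K) = lam * (lam^i * real (n K))" by simp
  also have "\<dots> \<le> lam * real (n (K+i))" using Suc.IH lam by (intro mult_left_mono) auto
  also have "\<dots> \<le> real (n (K + Suc i))" using lac[rule_format, of "K+i"] by simp
  finally show ?case .
qed

lemma lacunary_strict_mono:
  assumes lam: "lam > 1" and n1: "\<forall>k. n k \<ge> 1" and lac: "\<forall>k. real (n (Suc k)) \<ge> lam * real (n k)"
  shows "strict_mono n"
proof (rule strict_monoI_Suc)
  fix k
  have "real (n k) < lam * real (n k)" using lam n1[rule_format, of k] by simp
  also have "\<dots> \<le> real (n (Suc k))" using lac by auto
  finally show "n k < n (Suc k)" by simp
qed

lemma strict_mono_first_beyond:
  fixes n :: "nat \<Rightarrow> nat" and t :: real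
  assumes "strict_mono n"
  obtains K where "real (n K) > t" "\<forall>k<K. real (n k) \<le> t"
proof -
  obtain N :: nat where "t < N" using reals_Archimedean2 by blast
  moreover have "real N \<le> real (n N)" using strict_mono_imp_increasing[OF assms] by simp
  ultimately have "\<exists>k. real (n k) > t" by (intro exI[of _ N]) linarith
  then show ?thesis
    using that unfolding exists_least_iff[of "\<lambda>k. real (n k) > t"] by (auto simp: not_less)
qed

text \<open>The growth hypothesis on \<open>g\<close>, applied with \<open>q = (1 + lam)/2 < lam\<close>, makes \<open>g(n k)\<close> grow
  geometrically along a lacunary sequence from some index on.\<close>
lemma lacunary_gweight_growth:
  assumes growth: "\<forall>q>1. \<exists>A>1. \<exists>y0. \<forall>y>y0. \<forall>x>q*y. v (1 - 1/x) > A * v (1 - 1/y)"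
    and lam: "lam > 1" and n1: "\<forall>k. n k \<ge> 1" and lac: "\<forall>k. real (n (Suc k)) \<ge> lam * real (n k)"
  obtains A k0 where "A > 1" "\<forall>k\<ge>k0. gweight v (n (Suc k)) > A * gweight v (n k)"
proof -
  define q where "q = (1 + lam)/2"
  have q: "q > 1" "q < lam" using lam unfolding q_def by auto
  obtain A y0 where A: "A > 1" and Ay: "\<forall>y>y0. \<forall>x>q*y. gweight v x > A * gweight v y"
    using growth q(1) by blast
  obtain k0 :: nat where k0: "y0 < real k0" using reals_Archimedean2 by blast
  have "gweight v (n (Suc k)) > A * gweight v (n k)" if "k0 \<le> k" for k
  proof -
    have "k \<le> n k" using strict_mono_imp_increasing[OF lacunary_strict_mono[OF lam n1 lac]] .
    then have "real (n k) > y0" using that k0 by linarith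
    moreover have "q * real (n k) < lam * real (n k)" using q n1[rule_format, of k] by simp
    then have "q * real (n k) < real (n (Suc k))" using lac[rule_format, of k] by linarith
    ultimately show ?thesis using Ay by blast
  qed
  with A that show ?thesis by blast
qed

section \<open>Tail and head of the weighted series\<close>

text \<open>Tail estimate: once \<open>n K > t\<close>, the terms \<open>g(n k) r^(n k)\<close> with \<open>k \<ge> K\<close> are dominated by
  a geometric series of ratio \<open>1/lam\<close>, because \<open>t / n (K+i) \<le> lam^(-i)\<close>.\<close>
lemma lacunary_tail_bound:
  assumes w: "weight v" and D: "D \<ge> 1"
    and doubling: "\<forall>d\<in>{0<..1/2}. v (1 - d) \<le> D * v (1 - 2 * d)"
    and M: "\<forall>j. (2*D)^j * exp (-(2^j)/2) \<le> M"
    and lam: "lam > 1" and lac: "\<forall>k. real (n (Suc k)) \<ge> lam * real (n k)"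
    and t: "t \<ge> 1" and K: "real (n K) > t"
  defines "h \<equiv> \<lambda>k. gweight v (n k) * (1 - 1/t)^(n k)"
  shows "summable (\<lambda>i. h (i + K))" "(\<Sum>i. h (i + K)) \<le> M * (lam/(lam-1)) * gweight v t"
proof -
  have gt: "gweight v t \<ge> 1" using gweight_ge_1[OF w t] .
  have M0: "M \<ge> 0" using bound_of_dyadic_decay_nonneg[OF M] .
  have term_bound: "0 \<le> h (i + K) \<and> h (i + K) \<le> M * gweight v t * (1/lam)^i" for i
  proof -
    have grow: "real (n (K+i)) \<ge> lam^i * real (n K)" using lacunary_growth[OF lac] lam by simp
    have "lam^i * real (n K) \<ge> real (n K)" using lam K t by (simp add: one_le_power)
    then have beyond: "real (n (K+i)) > t" using grow K by linarith
    have "t / n (K+i) \<le> t / (lam^i * n K)"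
      using grow beyond K t lam by (intro divide_left_mono) (auto intro!: mult_pos_pos)
    also have "\<dots> = (1/lam)^i * (t / n K)" by (simp add: power_one_over)
    also have "\<dots> \<le> (1/lam)^i" using K t lam by (intro mult_left_le) auto
    finally have "M * (t / n (K+i)) * gweight v t \<le> M * (1/lam)^i * gweight v t"
      using M0 gt by (intro mult_right_mono mult_left_mono) auto
    with gweight_term_beyond[OF w D doubling M t beyond]
    have "h (i + K) \<le> M * gweight v t * (1/lam)^i"
      unfolding h_def by (simp add: add.commute mult_ac)
    moreover have "0 \<le> h (i + K)"
      unfolding h_def using gweight_ge_1[OF w, of "n (i+K)"] beyond t by (simp add: add.commute)
    ultimately show ?thesis by simp
  qed
  have "(\<lambda>i. (1/lam)^i) sums (1 / (1 - 1/lam))" by (rule geometric_sums) (use lam in auto)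
  also have "1 / (1 - 1/lam) = lam/(lam-1)" using lam by (simp add: field_simps)
  finally have geo: "(\<lambda>i. M * gweight v t * (1/lam)^i) sums (M * gweight v t * (lam/(lam-1)))"
    by (rule sums_mult)
  show sum: "summable (\<lambda>i. h (i + K))"
    by (rule summable_comparison_test'[OF sums_summable[OF geo], of 0]) (use term_bound in auto)
  show "(\<Sum>i. h (i + K)) \<le> M * (lam/(lam-1)) * gweight v t"
    using suminf_le[OF _ sum sums_summable[OF geo]] term_bound sums_unique[OF geo]
    by (simp add: mult_ac)
qed

lemma geometric_growth_sum:
  fixes G :: "nat \<Rightarrow> real"
  assumes A: "A > 1" and G: "\<forall>k. G k \<ge> 0" and step: "\<forall>k\<ge>k0. G (Suc k) > A * G k"
  shows "(\<Sum>k\<in>{k0..k0+m}. G k) \<le> A/(A-1) * G (k0+m)"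
proof (induction m)
  case 0
  have "1 \<le> A/(A-1)" using A by (simp add: field_simps)
  then show ?case using G mult_right_mono[of 1 "A/(A-1)" "G k0"] by simp
next
  case (Suc m)
  have last: "G (k0+m) \<le> G (Suc (k0+m)) / A"
    using step[rule_format, of "k0+m"] A by (simp add: field_simps)
  have "(\<Sum>k\<in>{k0..k0+Suc m}. G k) = (\<Sum>k\<in>{k0..k0+m}. G k) + G (Suc (k0+m))" by simp
  also have "\<dots> \<le> A/(A-1) * G (k0+m) + G (Suc (k0+m))" using Suc.IH by simp
  also have "\<dots> \<le> A/(A-1) * (G (Suc (k0+m)) / A) + G (Suc (k0+m))"
    using mult_left_mono[OF last, of "A/(A-1)"] A by simp
  also have "\<dots> = A/(A-1) * G (k0 + Suc m)" using A by (simp add: field_simps)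
  finally show ?case .
qed

lemma lacunary_head_bound:
  assumes w: "weight v" and n1: "\<forall>k. n k \<ge> 1" and A: "A > 1"
    and step: "\<forall>k\<ge>k0. gweight v (n (Suc k)) > A * gweight v (n k)"
    and t: "t \<ge> 1" and below: "\<forall>k<K. real (n k) \<le> t"
  shows "(\<Sum>k<K. gweight v (n k)) \<le> (\<Sum>k<k0. gweight v (n k)) + A/(A-1) * gweight v t"
proof -
  define G where "G k = gweight v (n k)" for k
  have "G k \<ge> 1" for k using gweight_ge_1[OF w, of "real (n k)"] n1 unfolding G_def by simp
  then have G: "G k \<ge> 0" for k using order_trans[OF zero_le_one] by blast
  show ?thesis
  proof (cases "K \<le> k0")
    case True
    have "sum G {..<K} \<le> sum G {..<k0}" by (rule sum_mono2) (use True G in auto)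
    moreover have "A/(A-1) * gweight v t \<ge> 0" using A gweight_ge_1[OF w t] by simp
    ultimately show ?thesis unfolding G_def by simp
  next
    case False
    define m where "m = K - 1 - k0"
    have K: "K = Suc (k0 + m)" using False unfolding m_def by simp
    have "{..<K} = {..<k0} \<union> {k0..k0+m}" using K by auto
    then have "sum G {..<K} = sum G {..<k0} + sum G {k0..k0+m}"
      by (simp add: sum.union_disjoint ivl_disj_int)
    also have "sum G {k0..k0+m} \<le> A/(A-1) * G (k0+m)"
      by (rule geometric_growth_sum[OF A]) (use G step in \<open>auto simp: G_def\<close>)
    also have "\<dots> \<le> A/(A-1) * gweight v t"
    proof -
      have "G (k0+m) \<le> gweight v t"
        unfolding G_def using gweight_mono[OF w, of "real (n (k0+m))" t] below K n1 by auto
      then show ?thesis using A by (intro mult_left_mono) auto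
    qed
    finally show ?thesis unfolding G_def by simp
  qed
qed

lemma lacunary_gweight_sum_at:
  assumes w: "weight v" and D: "D \<ge> 1"
    and doubling: "\<forall>d\<in>{0<..1/2}. v (1 - d) \<le> D * v (1 - 2 * d)"
    and M: "\<forall>j. (2*D)^j * exp (-(2^j)/2) \<le> M"
    and lam: "lam > 1" and n1: "\<forall>k. n k \<ge> 1" and lac: "\<forall>k. real (n (Suc k)) \<ge> lam * real (n k)"
    and A: "A > 1" and step: "\<forall>k\<ge>k0. gweight v (n (Suc k)) > A * gweight v (n k)"
    and t: "t \<ge> 1"
  defines "h \<equiv> \<lambda>k. gweight v (n k) * (1 - 1/t)^(n k)"
    and "S0 \<equiv> \<Sum>k<k0. gweight v (n k)"
  shows "summable h" "(\<Sum>k. h k) \<le> (S0 + A/(A-1) + M * (lam/(lam-1))) * gweight v t"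
proof -
  obtain K where K: "real (n K) > t" and below: "\<forall>k<K. real (n k) \<le> t"
    using strict_mono_first_beyond[OF lacunary_strict_mono[OF lam n1 lac]] by blast
  have G0: "0 \<le> gweight v (n k)" for k
    using gweight_ge_1[OF w, of "real (n k)"] n1 order_trans[OF zero_le_one] by simp
  have gt: "gweight v t \<ge> 1" using gweight_ge_1[OF w t] .
  have tail: "summable (\<lambda>i. h (i + K))" "(\<Sum>i. h (i + K)) \<le> M * (lam/(lam-1)) * gweight v t"
    using lacunary_tail_bound[OF w D doubling M lam lac t K] unfolding h_def by auto
  have "sum h {..<K} \<le> (\<Sum>k<K. gweight v (n k))"
    unfolding h_def using t G0 by (intro sum_mono mult_left_le) (auto simp: power_le_one)
  also have "\<dots> \<le> S0 + A/(A-1) * gweight v t"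
    using lacunary_head_bound[OF w n1 A step t below] unfolding S0_def by simp
  finally have head: "sum h {..<K} \<le> S0 + A/(A-1) * gweight v t" .
  show sum: "summable h" using tail(1) by (simp add: summable_iff_shift)
  have "S0 \<ge> 0" unfolding S0_def using G0 by (simp add: sum_nonneg)
  then have "S0 \<le> S0 * gweight v t" using gt by (simp add: mult_le_cancel_left1)
  then show "(\<Sum>k. h k) \<le> (S0 + A/(A-1) + M * (lam/(lam-1))) * gweight v t"
    using suminf_split_initial_segment[OF sum, of K] head tail(2) by (simp add: algebra_simps)
qed

lemma lacunary_gweight_sum_bound:
  assumes w: "weight v" and d: "doubling v"
    and growth: "\<forall>q>1. \<exists>A>1. \<exists>y0. \<forall>y>y0. \<forall>x>q*y. v (1 - 1/x) > A * v (1 - 1/y)"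
    and lam: "lam > 1" and n1: "\<forall>k. n k \<ge> 1" and lac: "\<forall>k. real (n (Suc k)) \<ge> lam * real (n k)"
  shows "\<exists>B. \<forall>r\<in>{0..<1}.
      summable (\<lambda>k. gweight v (n k) * r^(n k)) \<and> (\<Sum>k. gweight v (n k) * r^(n k)) \<le> B * v r"
proof -
  obtain D where D: "D \<ge> 1" and doubling: "\<forall>d\<in>{0<..1/2}. v (1 - d) \<le> D * v (1 - 2 * d)"
    using d unfolding doubling_def by blast
  obtain M where M: "\<forall>j. (2*D)^j * exp (-(2^j)/2) \<le> M"
    using power_times_exp_neg_dyadic_bounded[of "2*D"] D by auto
  obtain A k0 where A: "A > 1" and step: "\<forall>k\<ge>k0. gweight v (n (Suc k)) > A * gweight v (n k)"
    using lacunary_gweight_growth[OF growth lam n1 lac] by blast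
  define B where "B = (\<Sum>k<k0. gweight v (n k)) + A/(A-1) + M * (lam/(lam-1))"
  have "\<forall>r\<in>{0..<1}. summable (\<lambda>k. gweight v (n k) * r^(n k))
      \<and> (\<Sum>k. gweight v (n k) * r^(n k)) \<le> B * v r"
  proof
    fix r :: real assume "r \<in> {0..<1}"
    define t where "t = 1 / (1 - r)"
    have t: "t \<ge> 1" and r: "1 - 1/t = r"
      using \<open>r \<in> {0..<1}\<close> unfolding t_def by (auto simp: field_simps)
    show "summable (\<lambda>k. gweight v (n k) * r^(n k)) \<and> (\<Sum>k. gweight v (n k) * r^(n k)) \<le> B * v r"
      using lacunary_gweight_sum_at[OF w D doubling M lam n1 lac A step t] unfolding r B_def by simp
  qed
  then show ?thesis by (rule exI)
qed

lemma gap_series_dominated: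
  fixes a :: "nat \<Rightarrow> complex" and G :: "nat \<Rightarrow> real"
  assumes dom: "\<forall>k. norm (a k) \<le> C * G k" and C: "C \<ge> 0"
    and sum: "summable (\<lambda>k. G k * norm z ^ n k)" and bound: "(\<Sum>k. G k * norm z ^ n k) \<le> S"
  shows "summable (\<lambda>k. norm (a k * z ^ n k))" and "norm (\<Sum>k. a k * z ^ n k) \<le> C * S"
proof -
  have term_bound: "norm (a k * z ^ n k) \<le> C * (G k * norm z ^ n k)" for k
    using dom mult_right_mono[of "norm (a k)" "C * G k" "norm z ^ n k"]
    by (simp add: norm_mult norm_power mult.assoc)
  have sumC: "summable (\<lambda>k. C * (G k * norm z ^ n k))" using summable_mult[OF sum] .
  show sn: "summable (\<lambda>k. norm (a k * z ^ n k))"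
    by (rule summable_comparison_test'[OF sumC, of 0]) (use term_bound in auto)
  have "norm (\<Sum>k. a k * z ^ n k) \<le> (\<Sum>k. norm (a k * z ^ n k))" by (rule summable_norm[OF sn])
  also have "\<dots> \<le> (\<Sum>k. C * (G k * norm z ^ n k))" by (rule suminf_le[OF term_bound sn sumC])
  also have "\<dots> = C * (\<Sum>k. G k * norm z ^ n k)" by (rule suminf_mult[OF sum])
  also have "\<dots> \<le> C * S" using bound C by (rule mult_left_mono)
  finally show "norm (\<Sum>k. a k * z ^ n k) \<le> C * S" .
qed

text \<open>Membership in \<open>h_inf v\<close> only needs a growth bound with some real constant: since
  \<open>v \<ge> 1\<close>, any constant can be replaced by a positive one.\<close>
lemma h_inf_memI:
  assumes w: "weight v" and harm: "harmonic_on (ball 0 1) u"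
    and bound: "\<And>z. z \<in> ball 0 1 \<Longrightarrow> \<bar>u z\<bar> \<le> K * v (norm z)"
  shows "u \<in> h_inf v"
proof -
  have "\<bar>u z\<bar> \<le> (\<bar>K\<bar> + 1) * v (norm z)" if z: "z \<in> ball 0 1" for z
  proof -
    have "v (norm z) \<ge> 1" using w z unfolding weight_def by auto
    then have "K * v (norm z) \<le> (\<bar>K\<bar> + 1) * v (norm z)" by (intro mult_right_mono) auto
    with bound[OF z] show ?thesis by linarith
  qed
  moreover have "\<bar>K\<bar> + 1 > 0" by simp
  ultimately show ?thesis using harm unfolding h_inf_def by blast
qed

theorem corollary5:
  fixes v :: "real \<Rightarrow> real" and a :: "nat \<Rightarrow> complex" and n :: "nat \<Rightarrow> nat"
    and lam C :: real
  assumes "weight v" and "doubling v"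
    and "\<forall>q>1. \<exists>A>1. \<exists>y0. \<forall>y>y0. \<forall>x>q*y. v (1 - 1/x) > A * v (1 - 1/y)"
    and "lam > 1" and "\<forall>k. n k \<ge> 1" and "\<forall>k. real (n (Suc k)) \<ge> lam * real (n k)"
    and "\<forall>k. norm (a k) \<le> C * v (1 - 1 / real (n k))"
  shows "(\<lambda>z. Re (\<Sum>k. a k * z ^ n k)) \<in> h_inf v"
proof -
  note dom = assms(7)
  let ?F = "\<lambda>z. \<Sum>k. a k * z ^ n k"
  obtain B where B: "\<forall>r\<in>{0..<1}. summable (\<lambda>k. gweight v (n k) * r^(n k))
      \<and> (\<Sum>k. gweight v (n k) * r^(n k)) \<le> B * v r"
    using lacunary_gweight_sum_bound[OF assms(1-6)] by blast
  have "0 \<le> C * gweight v (n 0)" using dom[rule_format, of 0] norm_ge_zero order_trans by blast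
  then have C: "C \<ge> 0" using gweight_ge_1[OF assms(1), of "n 0"] assms(5) by (simp add: zero_le_mult_iff)
  have est: "summable (\<lambda>k. norm (a k * z ^ n k))" "norm (?F z) \<le> C * (B * v (norm z))"
    if "z \<in> ball 0 1" for z
    using gap_series_dominated[OF dom C, of z n "B * v (norm z)"] B[rule_format, of "norm z"] that
    by auto
  have "?F holomorphic_on ball 0 1"
    by (rule gap_series_holomorphic[OF lacunary_strict_mono[OF assms(4-6)]])
      (use est(1) in \<open>blast intro: summable_norm_cancel\<close>)
  then have "harmonic_on (ball 0 1) (\<lambda>z. Re (?F z))"
    by (rule harmonic_on_Re_holomorphic) simp
  moreover have "\<bar>Re (?F z)\<bar> \<le> (C * B) * v (norm z)" if "z \<in> ball 0 1" for z
    using abs_Re_le_cmod[of "?F z"] est(2)[OF that] by (simp add: mult.assoc)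
  ultimately show ?thesis by (rule h_inf_memI[OF assms(1)])
qed

end
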